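(* Let $\alpha\in(0,1]$, $w\in\mathbb{R}^p$ with $w_k>0$ for all $k$, and let $g(\beta)=\alpha\|w\circ\beta\|_1+\frac{1-\alpha}{2}\|\beta\|_2^2$. If $$\lambda\ge\max_{1\le k\le p}\frac{1}{n^2\alpha w_k}\Big\{\Big|\sum_{i=1}^n\sum_{j=1}^n\delta_i(x_{i,k}-x_{j,k})\mathbf{1}(y_i<y_j)\Big|+\sum_{i=1}^n\sum_{j=1}^n\mathbf{1}\{(i,j)\in\mathcal{K}\}\delta_i|x_{i,k}-x_{j,k}|\Big\},$$ then $\hat\beta=0$ is a minimizer of $\frac{1}{n^2}\sum_{i=1}^n\sum_{j=1}^n\delta_i\{e_i(\beta)-e_j(\beta)\}^-+\lambda g(\beta)$ over $\beta\in\mathbb{R}^p$.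
   Context: Data: $n\ge2$, $y_1,\dots,y_n>0$, $x_i=(x_{i,1},\dots,x_{i,p})^\top\in\mathbb{R}^p$, $\delta_i\in\{0,1\}$; $e_i(\beta)=\log y_i-\beta^\top x_i$; $a^-=\max(-a,0)$; $\circ$ is the elementwise product; $\mathcal{K}=\{(i,j): y_i=y_j,\ 1\le i\le n,\ 1\le j\le n\}$. *)

theory Defs
  imports "HOL-Analysis.Analysis"
begin

text \<open>Data indexed by i in {1..n}, covariate coordinates k in {1..p}.
  Vectors in R^p are represented as functions nat => real, of which only the
  coordinates 1..p are used.\<close>

definition negpart :: "real \<Rightarrow> real" where
  "negpart a = max (- a) 0"

definition resid :: "(nat \<Rightarrow> real) \<Rightarrow> (nat \<Rightarrow> nat \<Rightarrow> real) \<Rightarrow> nat \<Rightarrow> (nat \<Rightarrow> real) \<Rightarrow> nat \<Rightarrow> real" where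
  "resid y x p \<beta> i = ln (y i) - (\<Sum>k=1..p. \<beta> k * x i k)"

definition enet_penalty :: "real \<Rightarrow> (nat \<Rightarrow> real) \<Rightarrow> nat \<Rightarrow> (nat \<Rightarrow> real) \<Rightarrow> real" where
  "enet_penalty \<alpha> w p \<beta> =
     \<alpha> * (\<Sum>k=1..p. \<bar>w k * \<beta> k\<bar>) + (1 - \<alpha>) / 2 * (\<Sum>k=1..p. (\<beta> k)\<^sup>2)"

definition gehan_objective :: "nat \<Rightarrow> nat \<Rightarrow> (nat \<Rightarrow> real) \<Rightarrow> (nat \<Rightarrow> nat \<Rightarrow> real) \<Rightarrow> (nat \<Rightarrow> real)
    \<Rightarrow> real \<Rightarrow> real \<Rightarrow> (nat \<Rightarrow> real) \<Rightarrow> (nat \<Rightarrow> real) \<Rightarrow> real" where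
  "gehan_objective n p y x \<delta> \<alpha> lam w \<beta> =
     1 / (real n)\<^sup>2 * (\<Sum>i=1..n. \<Sum>j=1..n.
        \<delta> i * negpart (resid y x p \<beta> i - resid y x p \<beta> j))
     + lam * enet_penalty \<alpha> w p \<beta>"

definition lambda_max :: "nat \<Rightarrow> nat \<Rightarrow> (nat \<Rightarrow> real) \<Rightarrow> (nat \<Rightarrow> nat \<Rightarrow> real) \<Rightarrow> (nat \<Rightarrow> real)
    \<Rightarrow> real \<Rightarrow> (nat \<Rightarrow> real) \<Rightarrow> real" where
  "lambda_max n p y x \<delta> \<alpha> w =
     Max ((\<lambda>k. 1 / ((real n)\<^sup>2 * \<alpha> * w k) *
        (\<bar>\<Sum>i=1..n. \<Sum>j=1..n. \<delta> i * (x i k - x j k) * (if y i < y j then 1 else 0)\<bar>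
         + (\<Sum>i=1..n. \<Sum>j=1..n. (if y i = y j then 1 else 0) * \<delta> i * \<bar>x i k - x j k\<bar>)))
      ` {1..p})"

end

theory Submission
  imports Defs
begin

text \<open>The Gehan loss is a sum of convex functions \<open>negpart (e\<^sub>i - e\<^sub>j)\<close> of \<open>\<beta>\<close>; bounding each
  from below by its tangent at \<open>\<beta> = 0\<close> (slope \<open>1(y\<^sub>i < y\<^sub>j)\<close>, chosen as \<open>0\<close> on ties)
  shows that the loss exceeds its value at \<open>0\<close> by at least \<open>\<Sum>\<^sub>k \<beta>\<^sub>k S\<^sub>k\<close>, where
  \<open>S\<^sub>k\<close> is the Gehan score.  The hypothesis on \<open>lam\<close> says \<open>|S\<^sub>k| \<le> n\<^sup>2 lam \<alpha> w\<^sub>k\<close>, so this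
  linear term is dominated by the lasso part \<open>lam \<alpha> \<Sum>\<^sub>k w\<^sub>k |\<beta>\<^sub>k|\<close> of the penalty.\<close>

definition gehan_loss :: "nat \<Rightarrow> nat \<Rightarrow> (nat \<Rightarrow> real) \<Rightarrow> (nat \<Rightarrow> nat \<Rightarrow> real) \<Rightarrow> (nat \<Rightarrow> real)
    \<Rightarrow> (nat \<Rightarrow> real) \<Rightarrow> real" where
  "gehan_loss n p y x \<delta> \<beta> =
     (\<Sum>i=1..n. \<Sum>j=1..n. \<delta> i * negpart (resid y x p \<beta> i - resid y x p \<beta> j))"

definition gehan_score :: "nat \<Rightarrow> (nat \<Rightarrow> real) \<Rightarrow> (nat \<Rightarrow> nat \<Rightarrow> real) \<Rightarrow> (nat \<Rightarrow> real)
    \<Rightarrow> nat \<Rightarrow> real" where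
  "gehan_score n y x \<delta> k =
     (\<Sum>i=1..n. \<Sum>j=1..n. \<delta> i * (x i k - x j k) * (if y i < y j then 1 else 0))"

definition gehan_ties :: "nat \<Rightarrow> (nat \<Rightarrow> real) \<Rightarrow> (nat \<Rightarrow> nat \<Rightarrow> real) \<Rightarrow> (nat \<Rightarrow> real)
    \<Rightarrow> nat \<Rightarrow> real" where
  "gehan_ties n y x \<delta> k =
     (\<Sum>i=1..n. \<Sum>j=1..n. (if y i = y j then 1 else 0) * \<delta> i * \<bar>x i k - x j k\<bar>)"

lemma gehan_objective_eq:
  "gehan_objective n p y x \<delta> \<alpha> lam w \<beta>
     = gehan_loss n p y x \<delta> \<beta> / (real n)\<^sup>2 + lam * enet_penalty \<alpha> w p \<beta>"
  unfolding gehan_objective_def gehan_loss_def by simp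

lemma lambda_max_eq:
  "lambda_max n p y x \<delta> \<alpha> w =
     Max ((\<lambda>k. (\<bar>gehan_score n y x \<delta> k\<bar> + gehan_ties n y x \<delta> k) / ((real n)\<^sup>2 * \<alpha> * w k)) ` {1..p})"
  unfolding lambda_max_def gehan_score_def gehan_ties_def by simp

lemma negpart_diff_ge_tangent:
  "negpart (a - u) \<ge> negpart a + (if a < 0 then 1 else 0) * u"
  unfolding negpart_def by auto

lemma resid_diff:
  "resid y x p \<beta> i - resid y x p \<beta> j = ln (y i) - ln (y j) - (\<Sum>k=1..p. \<beta> k * (x i k - x j k))"
  unfolding resid_def by (simp add: right_diff_distrib sum_subtractf)

lemma gehan_loss_ge_tangent:
  assumes "\<forall>i\<in>{1..n}. y i > 0" and "\<forall>i\<in>{1..n}. \<delta> i \<ge> 0"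
  shows "gehan_loss n p y x \<delta> \<beta>
           \<ge> gehan_loss n p y x \<delta> (\<lambda>_. 0) + (\<Sum>k=1..p. \<beta> k * gehan_score n y x \<delta> k)"
proof -
  define u where "u i j = (\<Sum>k=1..p. \<beta> k * (x i k - x j k))" for i j
  have pair: "\<delta> i * negpart (ln (y i) - ln (y j) - u i j)
      \<ge> \<delta> i * negpart (ln (y i) - ln (y j)) + \<delta> i * (if y i < y j then 1 else 0) * u i j"
    if "i \<in> {1..n}" "j \<in> {1..n}" for i j
  proof -
    have "(ln (y i) - ln (y j) < 0) = (y i < y j)"
      using assms(1) that by simp
    then have "negpart (ln (y i) - ln (y j) - u i j)
        \<ge> negpart (ln (y i) - ln (y j)) + (if y i < y j then 1 else 0) * u i j"
      using negpart_diff_ge_tangent[of "ln (y i) - ln (y j)" "u i j"] by simp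
    then show ?thesis
      using assms(2) that by (metis distrib_left mult.assoc mult_left_mono)
  qed
  have linear: "(\<Sum>i=1..n. \<Sum>j=1..n. \<delta> i * (if y i < y j then 1 else 0) * u i j)
      = (\<Sum>k=1..p. \<beta> k * gehan_score n y x \<delta> k)"
  proof -
    have "(\<Sum>i=1..n. \<Sum>j=1..n. \<delta> i * (if y i < y j then 1 else 0) * u i j)
       = (\<Sum>i=1..n. \<Sum>j=1..n. \<Sum>k=1..p. \<beta> k * (\<delta> i * (x i k - x j k) * (if y i < y j then 1 else 0)))"
      unfolding u_def by (simp add: sum_distrib_left mult_ac)
    also have "\<dots> = (\<Sum>i=1..n. \<Sum>k=1..p. \<Sum>j=1..n. \<beta> k * (\<delta> i * (x i k - x j k) * (if y i < y j then 1 else 0)))"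
      by (rule sum.cong[OF refl], rule sum.swap)
    also have "\<dots> = (\<Sum>k=1..p. \<Sum>i=1..n. \<Sum>j=1..n. \<beta> k * (\<delta> i * (x i k - x j k) * (if y i < y j then 1 else 0)))"
      by (rule sum.swap)
    also have "\<dots> = (\<Sum>k=1..p. \<beta> k * gehan_score n y x \<delta> k)"
      unfolding gehan_score_def by (simp add: sum_distrib_left)
    finally show ?thesis .
  qed
  have "gehan_loss n p y x \<delta> (\<lambda>_. 0) + (\<Sum>k=1..p. \<beta> k * gehan_score n y x \<delta> k)
      = (\<Sum>i=1..n. \<Sum>j=1..n. \<delta> i * negpart (ln (y i) - ln (y j))
                              + \<delta> i * (if y i < y j then 1 else 0) * u i j)"
    unfolding gehan_loss_def resid_diff linear[symmetric] by (simp add: sum.distrib)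
  also have "\<dots> \<le> gehan_loss n p y x \<delta> \<beta>"
    unfolding gehan_loss_def resid_diff u_def[symmetric]
    by (intro sum_mono pair) auto
  finally show ?thesis .
qed

lemma gehan_ties_nonneg:
  assumes "\<forall>i\<in>{1..n}. \<delta> i \<ge> 0"
  shows "gehan_ties n y x \<delta> k \<ge> 0"
  unfolding gehan_ties_def using assms by (intro sum_nonneg) auto

lemma gehan_score_bound:
  assumes "\<forall>i\<in>{1..n}. \<delta> i \<ge> 0" and "n \<ge> 1" and "0 < \<alpha>" and "\<forall>k\<in>{1..p}. w k > 0"
    and "lam \<ge> lambda_max n p y x \<delta> \<alpha> w" and "k \<in> {1..p}"
  shows "\<bar>gehan_score n y x \<delta> k\<bar> \<le> (real n)\<^sup>2 * \<alpha> * w k * lam"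
proof -
  have pos: "(real n)\<^sup>2 * \<alpha> * w k > 0"
    using assms(2,3,4,6) by simp
  have "(\<bar>gehan_score n y x \<delta> k\<bar> + gehan_ties n y x \<delta> k) / ((real n)\<^sup>2 * \<alpha> * w k)
      \<le> lambda_max n p y x \<delta> \<alpha> w"
    unfolding lambda_max_eq using assms(6) by (intro Max_ge) auto
  also have "\<dots> \<le> lam"
    by (rule assms(5))
  finally have "(\<bar>gehan_score n y x \<delta> k\<bar> + gehan_ties n y x \<delta> k) / ((real n)\<^sup>2 * \<alpha> * w k) \<le> lam" .
  then have "\<bar>gehan_score n y x \<delta> k\<bar> + gehan_ties n y x \<delta> k \<le> (real n)\<^sup>2 * \<alpha> * w k * lam"
    using pos by (simp add: pos_divide_le_eq mult_ac)
  then show ?thesis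
    using gehan_ties_nonneg[OF assms(1), of y x k] by linarith
qed

lemma lambda_max_nonneg:
  assumes "\<forall>i\<in>{1..n}. \<delta> i \<ge> 0" and "0 < \<alpha>" and "\<forall>k\<in>{1..p}. w k > 0" and "p \<ge> 1"
  shows "lambda_max n p y x \<delta> \<alpha> w \<ge> 0"
proof -
  have "w 1 > 0"
    using assms(3,4) by simp
  then have "0 \<le> (real n)\<^sup>2 * \<alpha> * w 1"
    using assms(2) by simp
  then have "0 \<le> (\<bar>gehan_score n y x \<delta> 1\<bar> + gehan_ties n y x \<delta> 1) / ((real n)\<^sup>2 * \<alpha> * w 1)"
    using gehan_ties_nonneg[OF assms(1)] by (intro divide_nonneg_nonneg) auto
  also have "\<dots> \<le> lambda_max n p y x \<delta> \<alpha> w"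
    unfolding lambda_max_eq using assms(4) by (intro Max_ge) auto
  finally show ?thesis .
qed

lemma enet_penalty_ge_weighted_l1:
  assumes "\<alpha> \<le> 1"
  shows "enet_penalty \<alpha> w p \<beta> \<ge> \<alpha> * (\<Sum>k=1..p. \<bar>w k * \<beta> k\<bar>)"
  unfolding enet_penalty_def using assms by (simp add: sum_nonneg)

lemma sum_mult_ge_neg_weighted_abs:
  fixes b s w :: "'a \<Rightarrow> real"
  assumes "\<And>k. k \<in> A \<Longrightarrow> \<bar>s k\<bar> \<le> c * w k" and "\<And>k. k \<in> A \<Longrightarrow> w k > 0"
  shows "(\<Sum>k\<in>A. b k * s k) \<ge> - c * (\<Sum>k\<in>A. \<bar>w k * b k\<bar>)"
proof -
  have "- (c * \<bar>w k * b k\<bar>) \<le> b k * s k" if "k \<in> A" for k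
  proof -
    have "\<bar>b k * s k\<bar> \<le> \<bar>b k\<bar> * (c * w k)"
      unfolding abs_mult using assms(1)[OF that] by (intro mult_left_mono) auto
    also have "\<dots> = c * \<bar>w k * b k\<bar>"
      using assms(2)[OF that] by (simp add: abs_mult)
    finally show ?thesis by linarith
  qed
  then show ?thesis
    by (simp add: sum_distrib_left sum_negf[symmetric] sum_mono)
qed

theorem mainTheorem5:
  fixes n p :: nat and y :: "nat \<Rightarrow> real" and x :: "nat \<Rightarrow> nat \<Rightarrow> real"
    and \<delta> :: "nat \<Rightarrow> real" and \<alpha> lam :: real and w :: "nat \<Rightarrow> real"
  assumes "n \<ge> 2" and "p \<ge> 1"
    and "\<forall>i\<in>{1..n}. y i > 0"
    and "\<forall>i\<in>{1..n}. \<delta> i \<in> {0, 1}"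
    and "0 < \<alpha>" and "\<alpha> \<le> 1"
    and "\<forall>k\<in>{1..p}. w k > 0"
    and "lam \<ge> lambda_max n p y x \<delta> \<alpha> w"
  shows "\<forall>\<beta>. gehan_objective n p y x \<delta> \<alpha> lam w (\<lambda>_. 0)
              \<le> gehan_objective n p y x \<delta> \<alpha> lam w \<beta>"
proof
  fix \<beta> :: "nat \<Rightarrow> real"
  define N where "N = (real n)\<^sup>2"
  define W where "W = (\<Sum>k=1..p. \<bar>w k * \<beta> k\<bar>)"
  have \<delta>_nonneg: "\<forall>i\<in>{1..n}. \<delta> i \<ge> 0" using assms(4) by auto
  have N_pos: "N > 0" using assms(1) by (simp add: N_def)
  have lam_nonneg: "lam \<ge> 0"
    using lambda_max_nonneg[OF \<delta>_nonneg assms(5,7,2), where y = y and x = x] assms(8) by linarith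
  have "(\<Sum>k=1..p. \<beta> k * gehan_score n y x \<delta> k) \<ge> - (N * \<alpha> * lam) * W"
    unfolding W_def N_def using assms(1,5,7,8) gehan_score_bound[OF \<delta>_nonneg]
    by (intro sum_mult_ge_neg_weighted_abs) (auto simp: mult_ac)
  then have "gehan_loss n p y x \<delta> (\<lambda>_. 0) - N * (lam * \<alpha> * W) \<le> gehan_loss n p y x \<delta> \<beta>"
    using gehan_loss_ge_tangent[OF assms(3) \<delta>_nonneg, of p x \<beta>] by (simp add: mult_ac)
  then have "(gehan_loss n p y x \<delta> (\<lambda>_. 0) - N * (lam * \<alpha> * W)) / N \<le> gehan_loss n p y x \<delta> \<beta> / N"
    using N_pos by (simp add: divide_right_mono)
  then have "gehan_loss n p y x \<delta> (\<lambda>_. 0) / N - lam * \<alpha> * W \<le> gehan_loss n p y x \<delta> \<beta> / N"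
    using N_pos by (simp add: diff_divide_distrib)
  moreover have "lam * enet_penalty \<alpha> w p \<beta> \<ge> lam * (\<alpha> * W)"
    unfolding W_def using enet_penalty_ge_weighted_l1[OF assms(6)] lam_nonneg by (simp add: mult_left_mono)
  moreover have "enet_penalty \<alpha> w p (\<lambda>_. 0) = 0"
    unfolding enet_penalty_def by simp
  ultimately show "gehan_objective n p y x \<delta> \<alpha> lam w (\<lambda>_. 0) \<le> gehan_objective n p y x \<delta> \<alpha> lam w \<beta>"
    unfolding gehan_objective_eq N_def[symmetric] by simp
qed

end
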